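(* In the idealized setting described in the context, the PAIR framework uses at most $O(\lvert\mathcal S\rvert^2\log D)$ samples (rolled-out trajectories) to learn a policy $\pi$ such that $s\xrightarrow{\pi}g$ for every state $s$ and every goal $g$ reachable from $s$ (i.e. with $d(s,g)<\infty$).
   Context: Setting: a goal-conditioned Markov decision process with finite state space $\mathcal S$, finite action set $\mathcal A$, deterministic transitions, goal space $\mathcal G=\mathcal S$, and sparse reward $r(s,a,g)=\mathbb I\{s=g\}$. A policy is $\pi(a|s,g)$. Write $s\xrightarrow{\pi} g$ if, starting at $s_0=s$ and choosing $a_i\sim\pi(\cdot|s_i,g)$, $s_{i+1}\sim P(\cdot|s_i,a_i)$, the goal $g$ is reached with probability $1$. Let $d(s,s')$ be the minimum $t$ such that some policy reaches $s_t=s'$ from $s_0=s$ with probability $1$ ($+\infty$ if none), and $D=\max\{d(s,s'):d(s,s')<\infty\}$. Assumptions: the initial policy satisfies: if $P(s'|s,a)=1$ then $\pi^{(0)}(a|s,g=s')=1$. In each iteration every state-goal pair $(s,g)\in\mathcal S\times\mathcal S$ is sampled at least once and only a constant number of times. Idealized PAIR iteration $k$: for each pair $(s,g)$, roll out $\pi^{(k-1)}$ from $s$ toward $g$; if it succeeds the trajectory is added to the dataset; otherwise task reduction selects a subgoal $s'$ maximizing $V(s,s')\cdot V(s',g)$, where $V$ is the goal-conditioned value function (equal to $1$ exactly on pairs $(x,y)$ with $x\xrightarrow{\pi^{(k-1)}}y$), executes $\pi^{(k-1)}(\cdot|\cdot,s')$ from $s$ and then $\pi^{(k-1)}(\cdot|\cdot,g)$,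 and adds the resulting successful trajectory from $s$ to $g$ if any. The supervised learning step then produces $\pi^{(k)}$ with $s\xrightarrow{\pi^{(k)}}g$ for every pair $(s,g)$ for which the dataset contains a successful trajectory from $s$ to $g$. *)

theory Defs
  imports "HOL-Probability.Probability"
begin

text \<open>Deterministic goal-conditioned MDP: transition function step :: state => action => state.
  A (goal-conditioned, stochastic) policy is pol :: state => goal => action pmf, goals = states.\<close>

fun hit_prob :: "('s \<Rightarrow> 'a \<Rightarrow> 's) \<Rightarrow> ('s \<Rightarrow> 's \<Rightarrow> 'a pmf) \<Rightarrow> 's \<Rightarrow> nat \<Rightarrow> 's \<Rightarrow> real" where
  "hit_prob step pol g 0 s = (if s = g then 1 else 0)"
| "hit_prob step pol g (Suc t) s =
     (if s = g then 1 else measure_pmf.expectation (pol s g) (\<lambda>a. hit_prob step pol g t (step s a)))"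

text \<open>s --pol--> g : the goal g is reached with probability 1 (probability of ever hitting g
  is the limit of the probabilities of hitting it by time t).\<close>
definition reaches :: "('s \<Rightarrow> 'a \<Rightarrow> 's) \<Rightarrow> ('s \<Rightarrow> 's \<Rightarrow> 'a pmf) \<Rightarrow> 's \<Rightarrow> 's \<Rightarrow> bool" where
  "reaches step pol s g \<longleftrightarrow> ((\<lambda>t. hit_prob step pol g t s) \<longlonglongrightarrow> 1)"

fun state_dist :: "('s \<Rightarrow> 'a \<Rightarrow> 's) \<Rightarrow> ('s \<Rightarrow> 's \<Rightarrow> 'a pmf) \<Rightarrow> 's \<Rightarrow> nat \<Rightarrow> 's \<Rightarrow> 's pmf" where
  "state_dist step pol g 0 s = return_pmf s"
| "state_dist step pol g (Suc t) s =
     bind_pmf (state_dist step pol g t s) (\<lambda>x. map_pmf (step x) (pol x g))"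

definition dist :: "('s \<Rightarrow> 'a \<Rightarrow> 's) \<Rightarrow> 's \<Rightarrow> 's \<Rightarrow> enat" where
  "dist step s s' =
     (if \<exists>t pol. pmf (state_dist step pol s' t s) s' = 1
      then enat (LEAST t. \<exists>pol. pmf (state_dist step pol s' t s) s' = 1)
      else \<infinity>)"

definition diam :: "('s \<Rightarrow> 'a \<Rightarrow> 's) \<Rightarrow> nat" where
  "diam step = Max {m. \<exists>s s'. dist step s s' = enat m}"

end

theory Submission
  imports Defs "HOL-Library.Log_Nat"
begin

text \<open>Induction on k: the policy after k iterations reaches g from s whenever some walk of length
  at most 2^k leads from s to g. For the
  step, cut the walk at a midpoint m; both halves are reached by the current policy, so
  V(s,m) V(m,g) = 1, hence the maximising subgoal u also has V(s,u) V(u,g) = 1, both legs succeed,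
  and (s,g) enters the dataset. After ceil(log2 D) iterations every reachable pair is solved, and
  each iteration rolls out at most 2c trajectories per pair (one direct attempt and at most one
  reduced one per sample).\<close>

definition transitions :: "('s \<Rightarrow> 'a \<Rightarrow> 's) \<Rightarrow> 's rel" where
  "transitions step = {(x, step x a) | x a. True}"

lemma state_dist_support_relpow:
  "x \<in> set_pmf (state_dist step pol g t s) \<Longrightarrow> (s, x) \<in> transitions step ^^ t"
  by (induction t arbitrary: x) (auto simp: transitions_def relcomp_unfold)

lemma dist_enat_relpow:
  assumes "dist step s g = enat t"
  shows "(s, g) \<in> transitions step ^^ t"
proof -
  have reachable: "\<exists>t pol. pmf (state_dist step pol g t s) g = 1"
    using assms unfolding dist_def by (auto split: if_splits)
  then have "t = (LEAST t. \<exists>pol. pmf (state_dist step pol g t s) g = 1)"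
    using assms unfolding dist_def by simp
  then obtain pol where "pmf (state_dist step pol g t s) g = 1"
    using LeastI_ex[OF reachable] by auto
  then have "g \<in> set_pmf (state_dist step pol g t s)"
    by (simp add: set_pmf_iff)
  then show ?thesis
    by (rule state_dist_support_relpow)
qed

lemma dist_le_diam:
  fixes step :: "'s::finite \<Rightarrow> 'a \<Rightarrow> 's"
  assumes "dist step s g = enat t"
  shows "t \<le> diam step"
proof -
  have "{m. \<exists>s s'. dist step s s' = enat m} \<subseteq> range (\<lambda>(s, s'). the_enat (dist step s s'))"
    by (auto simp: image_iff) (metis the_enat.simps)
  then have "finite {m. \<exists>s s'. dist step s s' = enat m}"
    by (rule finite_subset) simp
  then show ?thesis
    unfolding diam_def using assms by (auto intro: Max_ge)
qed

lemma hit_prob_goal: "hit_prob step pol g t g = 1"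
  by (cases t) auto

lemma reaches_refl: "reaches step pol g g"
  unfolding reaches_def hit_prob_goal by simp

lemma reaches_if_next_is_goal:
  assumes "\<And>b. b \<in> set_pmf (pol s g) \<Longrightarrow> step s b = g"
  shows "reaches step pol s g"
proof -
  have "hit_prob step pol g (Suc t) s = 1" for t
  proof (cases "s = g")
    case False
    have "measure_pmf.expectation (pol s g) (\<lambda>a. hit_prob step pol g t (step s a))
        = measure_pmf.expectation (pol s g) (\<lambda>a. 1)"
      by (rule integral_cong_AE) (auto simp: AE_measure_pmf_iff assms hit_prob_goal)
    then show ?thesis
      using False by simp
  qed simp
  then have "(\<lambda>t. hit_prob step pol g (Suc t) s) \<longlonglongrightarrow> 1"
    by simp
  then show ?thesis
    unfolding reaches_def by (rule LIMSEQ_imp_Suc)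
qed

lemma unit_interval_mult_ge_one:
  fixes x y :: real
  assumes "0 \<le> x" "x \<le> 1" "0 \<le> y" "y \<le> 1" "1 \<le> x * y"
  shows "x = 1" "y = 1"
proof -
  have "x * y \<le> x" "x * y \<le> y"
    using assms by (simp_all add: mult_left_le mult_left_le_one_le)
  then show "x = 1" "y = 1"
    using assms by linarith+
qed

locale pair_iteration =
  fixes step :: "'s \<Rightarrow> 'a \<Rightarrow> 's"
    and pol :: "nat \<Rightarrow> 's \<Rightarrow> 's \<Rightarrow> 'a pmf"
    and V :: "nat \<Rightarrow> 's \<Rightarrow> 's \<Rightarrow> real"
    and sub :: "nat \<Rightarrow> 's \<Rightarrow> 's \<Rightarrow> 's"
    and data :: "nat \<Rightarrow> ('s \<times> 's) set"
  assumes init: "b \<in> set_pmf (pol 0 s (step s a)) \<Longrightarrow> step s b = step s a"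
    and V_range: "0 \<le> V (Suc k) x y" "V (Suc k) x y \<le> 1"
    and V_one: "V (Suc k) x y = 1 \<longleftrightarrow> reaches step (pol k) x y"
    and sub_max: "\<not> reaches step (pol k) s g \<Longrightarrow>
      V (Suc k) s s' * V (Suc k) s' g \<le> V (Suc k) s (sub (Suc k) s g) * V (Suc k) (sub (Suc k) s g) g"
    and data_direct: "reaches step (pol k) s g \<Longrightarrow> (s, g) \<in> data (Suc k)"
    and data_reduce: "\<not> reaches step (pol k) s g \<Longrightarrow> reaches step (pol k) s (sub (Suc k) s g) \<Longrightarrow>
      reaches step (pol k) (sub (Suc k) s g) g \<Longrightarrow> (s, g) \<in> data (Suc k)"
    and learn: "(s, g) \<in> data (Suc k) \<Longrightarrow> reaches step (pol (Suc k)) s g"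
begin

lemma reaches_initial:
  assumes "(s, g) \<in> transitions step ^^ t" "t \<le> 1"
  shows "reaches step (pol 0) s g"
proof -
  consider "t = 0" | "t = 1"
    using assms(2) by linarith
  then show ?thesis
  proof cases
    case 1
    then show ?thesis
      using assms(1) reaches_refl by simp
  next
    case 2
    then obtain a where "g = step s a"
      using assms(1) by (auto simp: transitions_def)
    then show ?thesis
      by (auto intro: reaches_if_next_is_goal dest: init)
  qed
qed

lemma reaches_Suc_trans:
  assumes "reaches step (pol k) s m" "reaches step (pol k) m g"
  shows "reaches step (pol (Suc k)) s g"
proof -
  have "(s, g) \<in> data (Suc k)"
  proof (cases "reaches step (pol k) s g")
    case True
    then show ?thesis
      by (rule data_direct)
  next
    case False
    let ?u = "sub (Suc k) s g"
    have "V (Suc k) s m = 1" "V (Suc k) m g = 1"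
      using assms V_one by blast+
    then have "1 \<le> V (Suc k) s ?u * V (Suc k) ?u g"
      using sub_max[OF False, of m] by simp
    then have "V (Suc k) s ?u = 1" "V (Suc k) ?u g = 1"
      using unit_interval_mult_ge_one V_range by blast+
    then show ?thesis
      using False V_one data_reduce by blast
  qed
  then show ?thesis
    by (rule learn)
qed

lemma reaches_if_relpow_le_two_power:
  "(s, g) \<in> transitions step ^^ t \<Longrightarrow> t \<le> 2 ^ k \<Longrightarrow> reaches step (pol k) s g"
proof (induction k arbitrary: s g t)
  case 0
  then show ?case
    by (simp add: reaches_initial)
next
  case (Suc k)
  define t\<^sub>1 where "t\<^sub>1 = min t (2 ^ k)"
  have "t = t\<^sub>1 + (t - t\<^sub>1)" "t\<^sub>1 \<le> 2 ^ k" "t - t\<^sub>1 \<le> 2 ^ k"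
    using Suc.prems(2) by (auto simp: t\<^sub>1_def)
  then obtain m where "(s, m) \<in> transitions step ^^ t\<^sub>1" "(m, g) \<in> transitions step ^^ (t - t\<^sub>1)"
    using Suc.prems(1) by (metis relpow_add relcompE prod.inject)
  then show ?case
    using Suc.IH \<open>t\<^sub>1 \<le> 2 ^ k\<close> \<open>t - t\<^sub>1 \<le> 2 ^ k\<close> by (blast intro: reaches_Suc_trans)
qed

end

lemma sum_sample_counts_le:
  fixes n :: "nat \<Rightarrow> 'b::finite \<Rightarrow> 'b \<Rightarrow> nat"
  assumes "\<And>k s g. k \<ge> 1 \<Longrightarrow> n k s g \<le> c"
  shows "(\<Sum>k\<in>{1..K}. \<Sum>p\<in>(UNIV :: ('b \<times> 'b) set). 2 * n k (fst p) (snd p))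
    \<le> 2 * c * CARD('b) ^ 2 * K"
proof -
  have "(\<Sum>k\<in>{1..K}. \<Sum>p\<in>(UNIV :: ('b \<times> 'b) set). 2 * n k (fst p) (snd p))
      \<le> (\<Sum>k\<in>{1..K}. \<Sum>p\<in>(UNIV :: ('b \<times> 'b) set). 2 * c)"
    using assms by (intro sum_mono) auto
  also have "\<dots> = 2 * c * CARD('b) ^ 2 * K"
    by (simp flip: UNIV_Times_UNIV add: card_cartesian_product power2_eq_square)
  finally show ?thesis .
qed

lemma ceillog2_le_twice_log: "real (ceillog2 D) \<le> 2 * log 2 (real D)"
proof (cases "D \<le> 1")
  case True
  then show ?thesis
    by (cases "D = 0") (auto simp: log_def)
next
  case False
  then have "1 \<le> log 2 (real D)"
    by simp
  moreover have "real (ceillog2 D) < log 2 (real D) + 1"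
    using False by (intro ceillog2_less_log) simp
  ultimately show ?thesis
    by linarith
qed

theorem lemmaA2:
  fixes step :: "'s::finite \<Rightarrow> 'a::finite \<Rightarrow> 's"
    and pol :: "nat \<Rightarrow> 's \<Rightarrow> 's \<Rightarrow> 'a pmf"
    and V :: "nat \<Rightarrow> 's \<Rightarrow> 's \<Rightarrow> real"
    and sub :: "nat \<Rightarrow> 's \<Rightarrow> 's \<Rightarrow> 's"
    and data :: "nat \<Rightarrow> ('s \<times> 's) set"
    and n :: "nat \<Rightarrow> 's \<Rightarrow> 's \<Rightarrow> nat"
    and c :: nat
  assumes init: "\<And>s a b. b \<in> set_pmf (pol 0 s (step s a)) \<Longrightarrow> step s b = step s a"
    and V_range: "\<And>k x y. k \<ge> 1 \<Longrightarrow> 0 \<le> V k x y \<and> V k x y \<le> 1"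
    and V_one: "\<And>k x y. k \<ge> 1 \<Longrightarrow> (V k x y = 1 \<longleftrightarrow> reaches step (pol (k - 1)) x y)"
    and sub_max: "\<And>k s g s'. k \<ge> 1 \<Longrightarrow> \<not> reaches step (pol (k - 1)) s g \<Longrightarrow>
                    V k s s' * V k s' g \<le> V k s (sub k s g) * V k (sub k s g) g"
    and data_direct: "\<And>k s g. k \<ge> 1 \<Longrightarrow> reaches step (pol (k - 1)) s g \<Longrightarrow> (s, g) \<in> data k"
    and data_reduce: "\<And>k s g. k \<ge> 1 \<Longrightarrow> \<not> reaches step (pol (k - 1)) s g \<Longrightarrow>
                    reaches step (pol (k - 1)) s (sub k s g) \<Longrightarrow>
                    reaches step (pol (k - 1)) (sub k s g) g \<Longrightarrow> (s, g) \<in> data k"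
    and learn: "\<And>k s g. k \<ge> 1 \<Longrightarrow> (s, g) \<in> data k \<Longrightarrow> reaches step (pol k) s g"
    and samples: "\<And>k s g. k \<ge> 1 \<Longrightarrow> 1 \<le> n k s g \<and> n k s g \<le> c"
  shows "\<exists>K. (\<forall>s g. dist step s g \<noteq> \<infinity> \<longrightarrow> reaches step (pol K) s g) \<and>
             real (\<Sum>k\<in>{1..K}. \<Sum>p\<in>(UNIV :: ('s \<times> 's) set). 2 * n k (fst p) (snd p))
               \<le> 4 * real c * real (CARD('s))^2 * log 2 (real (diam step))"
proof -
  interpret pair_iteration step pol V sub data
    by unfold_locales (use init V_range V_one sub_max data_direct data_reduce learn in auto)
  define K where "K = ceillog2 (diam step)"
  have solved: "reaches step (pol K) s g" if finite_dist: "dist step s g \<noteq> \<infinity>" for s g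
  proof -
    obtain t where t: "dist step s g = enat t"
      using finite_dist by auto
    show ?thesis
      using dist_enat_relpow[OF t] dist_le_diam[OF t] le_two_power_ceillog2[of "diam step"]
      by (auto simp: K_def intro: reaches_if_relpow_le_two_power)
  qed
  have "real (\<Sum>k\<in>{1..K}. \<Sum>p\<in>(UNIV :: ('s \<times> 's) set). 2 * n k (fst p) (snd p))
      \<le> real (2 * c * CARD('s) ^ 2 * K)"
    using samples by (intro of_nat_mono sum_sample_counts_le) auto
  also have "\<dots> = (2 * real c * real CARD('s) ^ 2) * real (ceillog2 (diam step))"
    by (simp add: K_def)
  also have "\<dots> \<le> 4 * real c * real CARD('s) ^ 2 * log 2 (real (diam step))"
    using mult_left_mono[OF ceillog2_le_twice_log[of "diam step"], of "2 * real c * real CARD('s) ^ 2"]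
    by (simp add: mult_ac)
  finally show ?thesis
    using solved by blast
qed

end
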